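(* Let $\pi\in S_n$ and ${\bf m}\in\mathrm{GL}_n(k)$. (1) If $\pi\in\mathcal P_{\bf q}$, then ${\bf r}_\pi\in M(\mathcal{O}_{\bf q}(k^{n}))$. (2) If ${\bf m}\in M(\mathcal{O}_{\bf q}(k^{n}))$, then $\mathrm{Skel}({\bf m})\subseteq\mathcal P_{\bf q}$.
   Context: Let $k$ be a field, $n\ge1$, and ${\bf q}=(q_{ij})\in\mathcal M_n(k)$ with $q_{ij}q_{ji}=1$, $q_{ii}=1$ for all $i,j$. $\mathcal{O}_{\bf q}(k^{n})=k\langle x_1,\dots,x_n\rangle/\langle x_jx_i-q_{ij}x_ix_j\rangle$, graded with $\deg x_i=1$. $M(\mathcal{O}_{\bf q}(k^{n}))$ is the set of $A=(a_{ij})\in \mathrm{GL}_n(k)$ such that $x_i\mapsto \sum_j a_{ji}x_j$ extends to a graded algebra automorphism of $\mathcal{O}_{\bf q}(k^{n})$ (a subgroup of $\mathrm{GL}_n(k)$). The set of compatible permutations is $\mathcal P_{\bf q}=\{\pi\in S_n: q_{\pi(i)\pi(j)}=q_{ij}\ \forall\,1\le i,j\le n\}$, a subgroup of $S_n$. For $\pi\in S_n$, ${\bf r}_\pi=(r_{ij})$ is the permutation matrix with $r_{ij}=1$ if $i=\pi(j)$ and $r_{ij}=0$ otherwise. For ${\bf m}=(m_{ij})\in\mathrm{GL}_n(k)$, $\mathrm{Skel}({\bf m})=\{\pi\in S_n: m_{\pi(i)i}\neq0\ \forall\,1\le i\le n\}$ (nonempty since $\det{\bf m}\ne0$). *)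

theory Defs
  imports "Jordan_Normal_Form.Determinant" "HOL-Combinatorics.Permutations"
begin

text \<open>Indices are 0-based: x_0, ..., x_(n-1); matrices are n x n over a field 'k.\<close>

text \<open>Free algebra k<x_0,...,x_(n-1)>: coefficient functions on words (lists of letters).\<close>

definition fa_elems :: "nat \<Rightarrow> (nat list \<Rightarrow> 'k::field) set" where
  "fa_elems n = {f. finite {w. f w \<noteq> 0} \<and> (\<forall>w. f w \<noteq> 0 \<longrightarrow> set w \<subseteq> {..<n})}"

definition fa_mult :: "(nat list \<Rightarrow> 'k::field) \<Rightarrow> (nat list \<Rightarrow> 'k) \<Rightarrow> nat list \<Rightarrow> 'k" where
  "fa_mult f g = (\<lambda>w. \<Sum>i\<le>length w. f (take i w) * g (drop i w))"

definition fa_word :: "nat list \<Rightarrow> nat list \<Rightarrow> 'k::field" where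
  "fa_word w = (\<lambda>u. if u = w then 1 else 0)"

definition qrel :: "'k::field mat \<Rightarrow> nat \<Rightarrow> nat \<Rightarrow> nat list \<Rightarrow> 'k" where
  "qrel q i j = (\<lambda>u. fa_word [j, i] u - q $$ (i, j) * fa_word [i, j] u)"

inductive_set qideal :: "'k::field mat \<Rightarrow> nat \<Rightarrow> (nat list \<Rightarrow> 'k) set"
  for q :: "'k mat" and n :: nat where
  zero: "(\<lambda>_. 0) \<in> qideal q n"
| add: "f \<in> qideal q n \<Longrightarrow> g \<in> qideal q n \<Longrightarrow> (\<lambda>w. f w + g w) \<in> qideal q n"
| gen: "a \<in> fa_elems n \<Longrightarrow> b \<in> fa_elems n \<Longrightarrow> i < n \<Longrightarrow> j < n \<Longrightarrow>
        fa_mult (fa_mult a (qrel q i j)) b \<in> qideal q n"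

definition lin_img :: "nat \<Rightarrow> 'k::field mat \<Rightarrow> nat \<Rightarrow> nat list \<Rightarrow> 'k" where
  "lin_img n A l = (\<lambda>u. case u of [j] \<Rightarrow> if j < n then A $$ (j, l) else 0 | _ \<Rightarrow> 0)"

definition word_img :: "nat \<Rightarrow> 'k::field mat \<Rightarrow> nat list \<Rightarrow> nat list \<Rightarrow> 'k" where
  "word_img n A w = foldr (\<lambda>l acc. fa_mult (lin_img n A l) acc) w (fa_word [])"

definition fa_hom :: "nat \<Rightarrow> 'k::field mat \<Rightarrow> (nat list \<Rightarrow> 'k) \<Rightarrow> nat list \<Rightarrow> 'k" where
  "fa_hom n A f = (\<lambda>u. \<Sum>w\<in>{w. f w \<noteq> 0}. f w * word_img n A w u)"

text \<open>M(O_q(k^n)): invertible A such that x_i |-> sum_j a_ji x_j extends to an (automatically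
  graded) algebra automorphism of O_q = free algebra / qideal, i.e. the free-algebra
  endomorphism preserves the ideal and the induced map on the quotient is bijective.\<close>
definition Mq :: "'k::field mat \<Rightarrow> nat \<Rightarrow> 'k mat set" where
  "Mq q n = {A. A \<in> carrier_mat n n \<and> det A \<noteq> 0 \<and>
     (\<forall>f\<in>qideal q n. fa_hom n A f \<in> qideal q n) \<and>
     (\<forall>g\<in>fa_elems n. \<exists>f\<in>fa_elems n. (\<lambda>w. fa_hom n A f w - g w) \<in> qideal q n) \<and>
     (\<forall>f\<in>fa_elems n. fa_hom n A f \<in> qideal q n \<longrightarrow> f \<in> qideal q n)}"

definition Pq :: "'k::field mat \<Rightarrow> nat \<Rightarrow> (nat \<Rightarrow> nat) set" where
  "Pq q n = {\<pi>. \<pi> permutes {..<n} \<and> (\<forall>i<n. \<forall>j<n. q $$ (\<pi> i, \<pi> j) = q $$ (i, j))}"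

definition perm_matrix :: "nat \<Rightarrow> (nat \<Rightarrow> nat) \<Rightarrow> 'k::field mat" where
  "perm_matrix n \<pi> = mat n n (\<lambda>(i, j). if i = \<pi> j then 1 else 0)"

definition Skel :: "nat \<Rightarrow> 'k::field mat \<Rightarrow> (nat \<Rightarrow> nat) set" where
  "Skel n m = {\<pi>. \<pi> permutes {..<n} \<and> (\<forall>i<n. m $$ (\<pi> i, i) \<noteq> 0)}"

end

theory Submission
  imports Defs
begin

text \<open>
  (1) The endomorphism of the free algebra given by r_pi sends a word w to the word pi(w),
  and for a compatible pi this relabelling maps every defining relation to a defining
  relation; the inverse relabelling shows bijectivity modulo the ideal.

  (2) On degree two, the coordinates of the q-normal form are linear forms vanishing on the
  ideal.  Applied to the image of x_j x_i - q_ij x_i x_j they say that the images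
  y_i = sum_c m_ci x_c of the generators satisfy y_j y_i = q_ij y_i y_j.  Writing
  x_k = sum_l b_lk y_l with b = m^-1 gives y_i x_k = t_k y_i with t_k linear, and comparing
  normal forms forces t_k = q_kc x_k for every c with m_ci != 0.  Hence
  m diag(q_li)_l m^-1 = diag(q_dc)_d, so m_ci != 0 and m_dk != 0 imply q_dc = q_ki; for
  pi in Skel(m) take (c, i) = (pi j, j) and (d, k) = (pi i, i).
\<close>

section \<open>The free algebra and the ideal of relations\<close>

lemma fa_mult_Nil: "fa_mult f g [] = f [] * g []"
  by (simp add: fa_mult_def)

lemma fa_mult_singleton: "fa_mult f g [x] = f [] * g [x] + f [x] * g []"
  by (simp add: fa_mult_def atMost_Suc)

lemma fa_mult_pair: "fa_mult f g [x, y] = f [] * g [x, y] + f [x] * g [y] + f [x, y] * g []"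
  by (simp add: fa_mult_def atMost_Suc)

lemma fa_mult_fa_word_Nil_right: "fa_mult f (fa_word []) = f"
proof
  fix w
  have "fa_mult f (fa_word []) w = (\<Sum>i\<le>length w. if i = length w then f w else 0)"
    unfolding fa_mult_def fa_word_def by (intro sum.cong) auto
  then show "fa_mult f (fa_word []) w = f w" by simp
qed

lemma fa_mult_fa_word_Nil_left: "fa_mult (fa_word []) f = f"
proof
  fix w
  have "fa_mult (fa_word []) f w = (\<Sum>i\<le>length w. if i = 0 then f w else 0)"
    unfolding fa_mult_def fa_word_def by (intro sum.cong) auto
  then show "fa_mult (fa_word []) f w = f w" by simp
qed

lemma fa_mult_fa_word: "fa_mult (fa_word u) (fa_word v) = (fa_word (u @ v) :: nat list \<Rightarrow> 'k::field)"
proof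
  fix w
  have "fa_mult (fa_word u) (fa_word v) w =
      (\<Sum>i\<le>length w. if i = length u \<and> w = u @ v then (1::'k) else 0)"
    unfolding fa_mult_def fa_word_def by (intro sum.cong refl) (auto simp: append_eq_conv_conj)
  also have "\<dots> = (fa_word (u @ v) w :: 'k)"
    by (auto simp: fa_word_def)
  finally show "fa_mult (fa_word u) (fa_word v) w = (fa_word (u @ v) w :: 'k)" .
qed

lemma fa_word_in_fa_elems: "set w \<subseteq> {..<n} \<Longrightarrow> fa_word w \<in> fa_elems n"
  unfolding fa_elems_def fa_word_def by auto

lemma fa_mult_support:
  "{w. fa_mult f g w \<noteq> 0} \<subseteq> (\<lambda>(a, b). a @ b) ` ({w. f w \<noteq> 0} \<times> {w. g w \<noteq> 0})"
proof
  fix w assume "w \<in> {w. fa_mult f g w \<noteq> 0}"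
  then obtain i where "f (take i w) * g (drop i w) \<noteq> 0"
    unfolding fa_mult_def by (auto elim: sum.not_neutral_contains_not_neutral)
  then show "w \<in> (\<lambda>(a, b). a @ b) ` ({w. f w \<noteq> 0} \<times> {w. g w \<noteq> 0})"
    by (auto intro!: image_eqI[where x="(take i w, drop i w)"])
qed

lemma fa_mult_in_fa_elems:
  assumes "f \<in> fa_elems n" "g \<in> fa_elems n"
  shows "fa_mult f g \<in> fa_elems n"
proof -
  have "finite {w. fa_mult f g w \<noteq> 0}"
    using assms by (intro finite_subset[OF fa_mult_support]) (auto simp: fa_elems_def)
  moreover have "set w \<subseteq> {..<n}" if "fa_mult f g w \<noteq> 0" for w
  proof -
    from that have "w \<in> (\<lambda>(a, b). a @ b) ` ({w. f w \<noteq> 0} \<times> {w. g w \<noteq> 0})"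
      using fa_mult_support by blast
    then obtain a b where "w = a @ b" "f a \<noteq> 0" "g b \<noteq> 0" by auto
    then show ?thesis using assms unfolding fa_elems_def by auto
  qed
  ultimately show ?thesis by (simp add: fa_elems_def)
qed

lemma fa_add_in_fa_elems:
  assumes "f \<in> fa_elems n" "g \<in> fa_elems n"
  shows "(\<lambda>w. f w + g w) \<in> fa_elems n"
proof -
  have "{w. f w + g w \<noteq> 0} \<subseteq> {w. f w \<noteq> 0} \<union> {w. g w \<noteq> 0}" by auto
  then show ?thesis using assms unfolding fa_elems_def by (auto intro: finite_subset)
qed

lemma qrel_support: "{w. qrel q i j w \<noteq> 0} \<subseteq> {[j, i], [i, j]}"
proof
  fix w assume "w \<in> {w. qrel q i j w \<noteq> 0}"
  then show "w \<in> {[j, i], [i, j]}"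
    by (rule contrapos_pp) (simp add: qrel_def fa_word_def)
qed

lemma qrel_in_fa_elems: "i < n \<Longrightarrow> j < n \<Longrightarrow> qrel q i j \<in> fa_elems n"
  using qrel_support[of q i j] unfolding fa_elems_def by (auto intro: finite_subset)

lemma qideal_subset_fa_elems: "qideal q n \<subseteq> fa_elems n"
proof
  fix f assume "f \<in> qideal q n"
  then show "f \<in> fa_elems n"
  proof induction
    case zero
    then show ?case by (simp add: fa_elems_def)
  qed (simp_all add: fa_add_in_fa_elems fa_mult_in_fa_elems qrel_in_fa_elems)
qed

lemma qrel_in_qideal: "i < n \<Longrightarrow> j < n \<Longrightarrow> qrel q i j \<in> qideal q n"
  using qideal.gen[OF fa_word_in_fa_elems fa_word_in_fa_elems, of "[]" n "[]" i j q]
  by (simp add: fa_mult_fa_word_Nil_left fa_mult_fa_word_Nil_right)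

section \<open>Compatible permutations give automorphisms\<close>

definition fa_relabel :: "(nat \<Rightarrow> nat) \<Rightarrow> (nat list \<Rightarrow> 'k) \<Rightarrow> nat list \<Rightarrow> 'k" where
  "fa_relabel s f = (\<lambda>w. f (map s w))"

lemma fa_relabel_fa_mult: "fa_relabel s (fa_mult f g) = fa_mult (fa_relabel s f) (fa_relabel s g)"
  by (simp add: fa_relabel_def fa_mult_def take_map drop_map)

lemma fa_relabel_fa_relabel: "fa_relabel s (fa_relabel t f) = fa_relabel (t \<circ> s) f"
  by (simp add: fa_relabel_def)

lemma fa_relabel_id: "fa_relabel id f = f"
  by (simp add: fa_relabel_def)

lemma fa_relabel_in_fa_elems:
  assumes s: "s permutes {..<n}" and f: "f \<in> fa_elems n"
  shows "fa_relabel s f \<in> fa_elems n"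
proof -
  have "finite {w. fa_relabel s f w \<noteq> 0}"
    using finite_vimageI[of "{w. f w \<noteq> 0}" "map s"] inj_mapI[OF permutes_inj[OF s]] f
    by (simp add: fa_elems_def fa_relabel_def vimage_def)
  moreover have "set w \<subseteq> {..<n}" if "fa_relabel s f w \<noteq> 0" for w
  proof -
    have "set (map s w) \<subseteq> {..<n}"
      using that f unfolding fa_relabel_def fa_elems_def by blast
    then have "s ` set w \<subseteq> {..<n}" by simp
    then show ?thesis using s by (metis permutes_image permutes_inj inj_image_subset_iff)
  qed
  ultimately show ?thesis by (simp add: fa_elems_def)
qed

lemma fa_relabel_qrel:
  assumes "inj s" "q $$ (s i, s j) = q $$ (i, j)"
  shows "fa_relabel s (qrel q (s i) (s j)) = qrel q i j"
proof
  fix w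
  have "map s w = [s a, s b] \<longleftrightarrow> w = [a, b]" for a b
    using inj_map_eq_map[OF assms(1), of w "[a, b]"] by simp
  then show "fa_relabel s (qrel q (s i) (s j)) w = qrel q i j w"
    by (simp add: fa_relabel_def qrel_def fa_word_def assms(2))
qed

lemma Pq_inv:
  assumes "p \<in> Pq q n"
  shows "Hilbert_Choice.inv p \<in> Pq q n"
proof -
  have p: "p permutes {..<n}" and qp: "\<forall>i<n. \<forall>j<n. q $$ (p i, p j) = q $$ (i, j)"
    using assms by (auto simp: Pq_def)
  have inv_p_less: "Hilbert_Choice.inv p i < n" if "i < n" for i
    using that permutes_in_image[OF permutes_inv[OF p]] by simp
  have "q $$ (Hilbert_Choice.inv p i, Hilbert_Choice.inv p j) = q $$ (i, j)"
    if "i < n" "j < n" for i j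
    using qp[rule_format, OF inv_p_less inv_p_less] that by (simp add: permutes_inverses(1)[OF p])
  then show ?thesis using permutes_inv[OF p] by (simp add: Pq_def)
qed

lemma qideal_relabel:
  assumes s: "s \<in> Pq q n" and f: "f \<in> qideal q n"
  shows "fa_relabel s f \<in> qideal q n"
  using f
proof induction
  case zero
  then show ?case by (simp add: fa_relabel_def qideal.zero)
next
  case (add f g)
  then show ?case using qideal.add by (simp add: fa_relabel_def)
next
  case (gen a b i j)
  have sp: "s permutes {..<n}" and qs: "\<forall>i<n. \<forall>j<n. q $$ (s i, s j) = q $$ (i, j)"
    using s by (auto simp: Pq_def)
  define i' j' where "i' = Hilbert_Choice.inv s i" and "j' = Hilbert_Choice.inv s j"
  have ij': "i' < n" "j' < n" "s i' = i" "s j' = j"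
    using gen permutes_in_image[OF permutes_inv[OF sp]]
    by (simp_all add: i'_def j'_def permutes_inverses(1)[OF sp])
  have "fa_relabel s (qrel q i j) = qrel q i' j'"
    using fa_relabel_qrel[OF permutes_inj[OF sp]] qs ij' by metis
  then have "fa_relabel s (fa_mult (fa_mult a (qrel q i j)) b) =
      fa_mult (fa_mult (fa_relabel s a) (qrel q i' j')) (fa_relabel s b)"
    by (simp add: fa_relabel_fa_mult)
  also have "\<dots> \<in> qideal q n"
    using gen ij' by (intro qideal.gen fa_relabel_in_fa_elems[OF sp])
  finally show ?case .
qed

lemma perm_matrix_carrier: "perm_matrix n p \<in> carrier_mat n n"
  by (simp add: perm_matrix_def)

lemma perm_matrix_index:
  "i < n \<Longrightarrow> j < n \<Longrightarrow> perm_matrix n p $$ (i, j) = (if i = p j then 1 else 0)"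
  by (simp add: perm_matrix_def)

lemma lin_img_perm_matrix:
  assumes "p permutes {..<n}" "l < n"
  shows "lin_img n (perm_matrix n p) l = fa_word [p l]"
proof
  fix u :: "nat list"
  have "p l < n" using assms by (meson lessThan_iff permutes_in_image)
  then show "lin_img n (perm_matrix n p) l u = fa_word [p l] u"
    using assms(2)
    by (auto simp: lin_img_def fa_word_def perm_matrix_index split: list.split)
qed

lemma word_img_perm_matrix:
  assumes "p permutes {..<n}" "set w \<subseteq> {..<n}"
  shows "word_img n (perm_matrix n p :: 'k::field mat) w = fa_word (map p w)"
  using assms(2)
proof (induction w)
  case Nil
  then show ?case by (simp add: word_img_def)
next
  case (Cons l w)
  then have "word_img n (perm_matrix n p :: 'k mat) (l # w) =
      fa_mult (fa_word [p l]) (fa_word (map p w))"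
    by (simp add: word_img_def lin_img_perm_matrix[OF assms(1)])
  then show ?case by (simp add: fa_mult_fa_word)
qed

lemma fa_hom_perm_matrix:
  assumes p: "p permutes {..<n}" and f: "f \<in> fa_elems n"
  shows "fa_hom n (perm_matrix n p) f = fa_relabel (Hilbert_Choice.inv p) f"
proof
  fix u
  let ?S = "{w. f w \<noteq> 0}"
  have "fa_hom n (perm_matrix n p) f u =
      (\<Sum>w\<in>?S. if w = map (Hilbert_Choice.inv p) u then f w else 0)"
    unfolding fa_hom_def
  proof (intro sum.cong refl)
    fix w assume "w \<in> ?S"
    then have "set w \<subseteq> {..<n}" using f by (auto simp: fa_elems_def)
    moreover have "(u = map p w) = (w = map (Hilbert_Choice.inv p) u)"
      using permutes_bij[OF p] by (auto simp: bij_is_inj bij_is_surj surj_f_inv_f map_idI)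
    ultimately show "f w * word_img n (perm_matrix n p) w u =
        (if w = map (Hilbert_Choice.inv p) u then f w else 0)"
      by (simp add: word_img_perm_matrix[OF p] fa_word_def)
  qed
  also have "\<dots> = fa_relabel (Hilbert_Choice.inv p) f u"
    using f by (simp add: sum.delta' fa_elems_def fa_relabel_def)
  finally show "fa_hom n (perm_matrix n p) f u = fa_relabel (Hilbert_Choice.inv p) f u" .
qed

lemma perm_matrix_mult:
  assumes p': "p' permutes {..<n}"
  shows "perm_matrix n p * perm_matrix n p' = (perm_matrix n (p \<circ> p') :: 'k::field mat)"
proof (rule eq_matI)
  fix i j assume "i < dim_row (perm_matrix n (p \<circ> p') :: 'k mat)"
    and "j < dim_col (perm_matrix n (p \<circ> p') :: 'k mat)"
  then have i: "i < n" and j: "j < n" by (simp_all add: perm_matrix_def)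
  have "(perm_matrix n p * perm_matrix n p' :: 'k mat) $$ (i, j) =
      (\<Sum>k\<in>{0..<n}. (if i = p k then 1 else 0) * (if k = p' j then 1 else 0))"
    using i j by (simp add: perm_matrix_def scalar_prod_def)
  also have "\<dots> = (\<Sum>k\<in>{0..<n}. if k = p' j then (if i = p k then 1 else 0) else 0)"
    by (intro sum.cong) auto
  also have "\<dots> = perm_matrix n (p \<circ> p') $$ (i, j)"
    using i j permutes_in_image[OF p', of j] by (simp add: perm_matrix_index)
  finally show "(perm_matrix n p * perm_matrix n p' :: 'k mat) $$ (i, j) =
      perm_matrix n (p \<circ> p') $$ (i, j)" .
qed (simp_all add: perm_matrix_def)

lemma perm_matrix_id: "perm_matrix n id = 1\<^sub>m n"
  by (auto simp: perm_matrix_def intro!: eq_matI)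

lemma det_perm_matrix_nonzero:
  assumes p: "p permutes {..<n}"
  shows "det (perm_matrix n p :: 'k::field mat) \<noteq> 0"
proof -
  let ?P = "perm_matrix n p :: 'k mat" and ?Q = "perm_matrix n (Hilbert_Choice.inv p) :: 'k mat"
  have "det ?P * det ?Q = det (?P * ?Q)"
    by (rule det_mult[symmetric]) (rule perm_matrix_carrier)+
  also have "?P * ?Q = 1\<^sub>m n"
    by (simp add: perm_matrix_mult[OF permutes_inv[OF p]] permutes_inv_o(1)[OF p] perm_matrix_id)
  finally show ?thesis by auto
qed

lemma perm_matrix_in_Mq:
  assumes pq: "p \<in> Pq q n"
  shows "perm_matrix n p \<in> Mq q n"
proof -
  have p: "p permutes {..<n}" using pq by (simp add: Pq_def)
  have relabel_inv: "fa_relabel p (fa_relabel (Hilbert_Choice.inv p) f) = f"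
    and inv_relabel: "fa_relabel (Hilbert_Choice.inv p) (fa_relabel p f) = f"
    for f :: "nat list \<Rightarrow> 'k"
    by (simp_all add: fa_relabel_fa_relabel permutes_inv_o[OF p] fa_relabel_id)
  have "fa_hom n (perm_matrix n p) f \<in> qideal q n" if "f \<in> qideal q n" for f
  proof -
    have "f \<in> fa_elems n" using that qideal_subset_fa_elems by blast
    then show ?thesis by (simp add: fa_hom_perm_matrix[OF p] qideal_relabel[OF Pq_inv[OF pq] that])
  qed
  moreover have "\<exists>f\<in>fa_elems n. (\<lambda>w. fa_hom n (perm_matrix n p) f w - g w) \<in> qideal q n"
    if "g \<in> fa_elems n" for g
  proof
    show pg: "fa_relabel p g \<in> fa_elems n" using fa_relabel_in_fa_elems[OF p that] .
    show "(\<lambda>w. fa_hom n (perm_matrix n p) (fa_relabel p g) w - g w) \<in> qideal q n"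
      using qideal.zero by (simp add: fa_hom_perm_matrix[OF p pg] inv_relabel)
  qed
  moreover have "f \<in> qideal q n"
    if "f \<in> fa_elems n" "fa_hom n (perm_matrix n p) f \<in> qideal q n" for f
  proof -
    have "fa_relabel p (fa_hom n (perm_matrix n p) f) \<in> qideal q n"
      by (rule qideal_relabel[OF pq that(2)])
    then show ?thesis by (simp add: fa_hom_perm_matrix[OF p that(1)] relabel_inv)
  qed
  ultimately show ?thesis
    using perm_matrix_carrier det_perm_matrix_nonzero[OF p] unfolding Mq_def by blast
qed

section \<open>The skeleton of an automorphism\<close>

text \<open>For c \<noteq> d, qcoeff2 q f c d is the coefficient of x_c x_d in the degree-two part of f
  after rewriting x_d x_c = q_cd x_c x_d.\<close>

definition qcoeff2 :: "'k::field mat \<Rightarrow> (nat list \<Rightarrow> 'k) \<Rightarrow> nat \<Rightarrow> nat \<Rightarrow> 'k" where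
  "qcoeff2 q f c d = (if c = d then f [c, c] else f [c, d] + q $$ (c, d) * f [d, c])"

lemma qcoeff2_qrel:
  assumes qinv: "\<forall>i<n. \<forall>j<n. q $$ (i, j) * q $$ (j, i) = 1"
    and qdiag: "\<forall>i<n. q $$ (i, i) = 1" and "i < n" "j < n"
  shows "qcoeff2 q (qrel q i j) c d = 0"
proof (cases "c = d")
  case True
  then show ?thesis using assms by (auto simp: qcoeff2_def qrel_def fa_word_def)
next
  case False
  have "q $$ (i, j) * q $$ (j, i) = 1" using assms by blast
  then show ?thesis using False by (auto simp: qcoeff2_def qrel_def fa_word_def algebra_simps)
qed

lemma qcoeff2_qideal:
  assumes qinv: "\<forall>i<n. \<forall>j<n. q $$ (i, j) * q $$ (j, i) = 1"
    and qdiag: "\<forall>i<n. q $$ (i, i) = 1" and f: "f \<in> qideal q n"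
  shows "qcoeff2 q f c d = 0"
  using f
proof induction
  case zero
  then show ?case by (simp add: qcoeff2_def)
next
  case (add f g)
  have "qcoeff2 q (\<lambda>w. f w + g w) c d = qcoeff2 q f c d + qcoeff2 q g c d"
    by (simp add: qcoeff2_def algebra_simps)
  then show ?case using add.IH by simp
next
  case (gen a b i j)
  have "fa_mult (fa_mult a (qrel q i j)) b [x, y] = a [] * b [] * qrel q i j [x, y]" for x y
    by (simp add: fa_mult_pair fa_mult_singleton fa_mult_Nil qrel_def fa_word_def)
  then have "qcoeff2 q (fa_mult (fa_mult a (qrel q i j)) b) c d =
      a [] * b [] * qcoeff2 q (qrel q i j) c d"
    by (simp add: qcoeff2_def algebra_simps)
  then show ?case using qcoeff2_qrel[OF qinv qdiag gen(3,4)] by simp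
qed

lemma fa_hom_eq_sum_superset:
  assumes "finite S" "{w. f w \<noteq> 0} \<subseteq> S"
  shows "fa_hom n A f u = (\<Sum>w\<in>S. f w * word_img n A w u)"
  unfolding fa_hom_def using assms by (intro sum.mono_neutral_left) auto

lemma word_img_pair:
  "c < n \<Longrightarrow> d < n \<Longrightarrow> word_img n A [a, b] [c, d] = A $$ (c, a) * A $$ (d, b)"
  by (simp add: word_img_def fa_mult_fa_word_Nil_right fa_mult_pair lin_img_def)

lemma fa_hom_qrel_pair:
  assumes qdiag: "\<forall>i<n. q $$ (i, i) = 1" and "i < n" "c < n" "d < n"
  shows "fa_hom n A (qrel q i j) [c, d] =
    A $$ (c, j) * A $$ (d, i) - q $$ (i, j) * A $$ (c, i) * A $$ (d, j)"
proof (cases "i = j")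
  case True
  have "fa_hom n A (qrel q i j) [c, d] = (\<Sum>w\<in>{[i, i]}. qrel q i j w * word_img n A w [c, d])"
    using qrel_support[of q i j] True by (intro fa_hom_eq_sum_superset) auto
  then show ?thesis using True assms by (simp add: qrel_def fa_word_def)
next
  case False
  have "fa_hom n A (qrel q i j) [c, d] =
      (\<Sum>w\<in>{[j, i], [i, j]}. qrel q i j w * word_img n A w [c, d])"
    using qrel_support[of q i j] by (intro fa_hom_eq_sum_superset) auto
  then show ?thesis
    using False assms by (simp add: qrel_def fa_word_def word_img_pair algebra_simps)
qed

text \<open>qprod2 q u v = qcoeff2 q ((sum_a u_a x_a) (sum_b v_b x_b)).\<close>

definition qprod2 :: "'k::field mat \<Rightarrow> (nat \<Rightarrow> 'k) \<Rightarrow> (nat \<Rightarrow> 'k) \<Rightarrow> nat \<Rightarrow> nat \<Rightarrow> 'k" where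
  "qprod2 q u v c d = (if c = d then u c * v c else u c * v d + q $$ (c, d) * u d * v c)"

lemma qprod2_cong:
  "u c = u' c \<Longrightarrow> u d = u' d \<Longrightarrow> v c = v' c \<Longrightarrow> v d = v' d \<Longrightarrow> qprod2 q u v c d = qprod2 q u' v' c d"
  by (simp add: qprod2_def)

lemma qprod2_sum_left:
  "qprod2 q (\<lambda>c. \<Sum>l\<in>L. a l * v l c) u c d = (\<Sum>l\<in>L. a l * qprod2 q (v l) u c d)"
  by (simp add: qprod2_def sum_distrib_left sum_distrib_right sum.distrib algebra_simps)

lemma qprod2_sum_right:
  "qprod2 q u (\<lambda>c. \<Sum>l\<in>L. a l * v l c) c d = (\<Sum>l\<in>L. a l * qprod2 q u (v l) c d)"
  by (simp add: qprod2_def sum_distrib_left sum.distrib algebra_simps)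

lemma Mq_columns_q_commute:
  assumes qinv: "\<forall>i<n. \<forall>j<n. q $$ (i, j) * q $$ (j, i) = 1"
    and qdiag: "\<forall>i<n. q $$ (i, i) = 1" and m: "m \<in> Mq q n"
    and "i < n" "j < n" "c < n" "d < n"
  shows "qprod2 q (\<lambda>c. m $$ (c, j)) (\<lambda>c. m $$ (c, i)) c d =
    q $$ (i, j) * qprod2 q (\<lambda>c. m $$ (c, i)) (\<lambda>c. m $$ (c, j)) c d"
proof -
  have "fa_hom n m (qrel q i j) \<in> qideal q n"
    using m qrel_in_qideal[OF \<open>i < n\<close> \<open>j < n\<close>] unfolding Mq_def by blast
  then have "qcoeff2 q (fa_hom n m (qrel q i j)) c d = 0"
    by (rule qcoeff2_qideal[OF qinv qdiag])
  moreover have "qcoeff2 q (fa_hom n m (qrel q i j)) c d =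
      qprod2 q (\<lambda>c. m $$ (c, j)) (\<lambda>c. m $$ (c, i)) c d -
      q $$ (i, j) * qprod2 q (\<lambda>c. m $$ (c, i)) (\<lambda>c. m $$ (c, j)) c d"
    using assms by (simp add: qcoeff2_def qprod2_def fa_hom_qrel_pair[OF qdiag] algebra_simps)
  ultimately show ?thesis by simp
qed

lemma qprod2_unit_right_eq:
  fixes u t :: "nat \<Rightarrow> 'k::field"
  assumes qinv: "\<forall>i<n. \<forall>j<n. q $$ (i, j) * q $$ (j, i) = 1"
    and qdiag: "\<forall>i<n. q $$ (i, i) = 1"
    and k: "k < n" and c0: "c0 < n" and u_c0: "u c0 \<noteq> 0"
    and eq: "\<forall>c<n. \<forall>d<n. qprod2 q u (\<lambda>c. if c = k then 1 else 0) c d = qprod2 q t u c d"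
    and l: "l < n"
  shows "t l = (if l = k then q $$ (k, c0) else 0)"
proof -
  have t_vanish: "t j = 0" if "j < n" "j \<noteq> k" for j
  proof (cases "u j = 0")
    case False
    then show ?thesis using eq[rule_format, of j j] that by (simp add: qprod2_def)
  next
    case True
    then have "c0 \<noteq> j" using u_c0 by auto
    then show ?thesis using eq[rule_format, of j c0] that c0 True u_c0 by (simp add: qprod2_def)
  qed
  have "t k = q $$ (k, c0)"
  proof (cases "c0 = k")
    case True
    then have "u k = t k * u k" using eq[rule_format, of k k] k by (simp add: qprod2_def)
    then show ?thesis using True u_c0 qdiag k by simp
  next
    case False
    then have "u c0 = q $$ (c0, k) * t k * u c0"
      using eq[rule_format, of c0 k] k c0 t_vanish[OF c0] by (simp add: qprod2_def)
    then have "q $$ (c0, k) * t k = 1" using u_c0 by (metis mult_cancel_right2)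
    then show ?thesis using qinv k c0 by (metis mult.assoc mult.commute mult_1_right)
  qed
  then show ?thesis using t_vanish l by simp
qed

lemma Mq_conjugate_diag:
  fixes q m B :: "'k::field mat"
  assumes qinv: "\<forall>i<n. \<forall>j<n. q $$ (i, j) * q $$ (j, i) = 1"
    and qdiag: "\<forall>i<n. q $$ (i, i) = 1" and m: "m \<in> Mq q n"
    and B: "B \<in> carrier_mat n n" and mB: "m * B = 1\<^sub>m n"
    and i: "i < n" and c0: "c0 < n" and m_c0: "m $$ (c0, i) \<noteq> 0"
    and k: "k < n" and c: "c < n"
  shows "(\<Sum>l\<in>{0..<n}. B $$ (l, k) * q $$ (l, i) * m $$ (c, l)) =
    (if c = k then q $$ (k, c0) else 0)"
proof -
  have m_carrier: "m \<in> carrier_mat n n" using m by (simp add: Mq_def)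
  define y where "y l = (\<lambda>c. m $$ (c, l))" for l
  define t where "t = (\<lambda>c. \<Sum>l\<in>{0..<n}. (B $$ (l, k) * q $$ (l, i)) * y l c)"
  have unit: "(if c = k then 1 else 0) = (\<Sum>l\<in>{0..<n}. B $$ (l, k) * y l c)" if "c < n" for c
  proof -
    have "(if c = k then 1 else 0) = (m * B) $$ (c, k)" using mB that k by simp
    also have "\<dots> = (\<Sum>l\<in>{0..<n}. B $$ (l, k) * y l c)"
      using m_carrier B that k by (simp add: scalar_prod_def y_def mult.commute)
    finally show ?thesis .
  qed
  have "qprod2 q (y i) (\<lambda>c. if c = k then 1 else 0) c d = qprod2 q t (y i) c d"
    if "c < n" "d < n" for c d
  proof -
    have "qprod2 q (y i) (\<lambda>c. if c = k then 1 else 0) c d =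
        qprod2 q (y i) (\<lambda>c. \<Sum>l\<in>{0..<n}. B $$ (l, k) * y l c) c d"
      by (rule qprod2_cong) (simp_all add: unit that)
    also have "\<dots> = (\<Sum>l\<in>{0..<n}. B $$ (l, k) * qprod2 q (y i) (y l) c d)"
      by (rule qprod2_sum_right)
    also have "\<dots> = (\<Sum>l\<in>{0..<n}. (B $$ (l, k) * q $$ (l, i)) * qprod2 q (y l) (y i) c d)"
      using Mq_columns_q_commute[OF qinv qdiag m _ i that] by (intro sum.cong) (simp_all add: y_def)
    also have "\<dots> = qprod2 q t (y i) c d"
      unfolding t_def by (rule qprod2_sum_left[symmetric])
    finally show ?thesis .
  qed
  then have "t c = (if c = k then q $$ (k, c0) else 0)"
    using qprod2_unit_right_eq[OF qinv qdiag k c0, of "y i" t c] m_c0 c by (simp add: y_def)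
  then show ?thesis by (simp add: t_def y_def)
qed

lemma Mq_support_q_compatible:
  fixes q m :: "'k::field mat"
  assumes qinv: "\<forall>i<n. \<forall>j<n. q $$ (i, j) * q $$ (j, i) = 1"
    and qdiag: "\<forall>i<n. q $$ (i, i) = 1" and m: "m \<in> Mq q n"
    and i: "i < n" and c0: "c0 < n" and m_c0: "m $$ (c0, i) \<noteq> 0"
    and k: "k < n" and d: "d < n" and m_dk: "m $$ (d, k) \<noteq> 0"
  shows "q $$ (d, c0) = q $$ (k, i)"
proof -
  have m_carrier: "m \<in> carrier_mat n n" and "det m \<noteq> 0" using m by (auto simp: Mq_def)
  from det_non_zero_imp_unit[OF this, unfolded Units_def, of "()"]
  obtain B where B: "B \<in> carrier_mat n n" and Bm: "B * m = 1\<^sub>m n" and mB: "m * B = 1\<^sub>m n"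
    by (auto simp: ring_mat_def)
  have "q $$ (d, c0) * m $$ (d, k) =
      (\<Sum>j\<in>{0..<n}. (if d = j then q $$ (j, c0) else 0) * m $$ (j, k))"
    using d by (simp add: if_distrib[of "\<lambda>x. x * _"] cong: if_cong)
  also have "\<dots> = (\<Sum>j\<in>{0..<n}. (\<Sum>l\<in>{0..<n}. B $$ (l, j) * q $$ (l, i) * m $$ (d, l)) * m $$ (j, k))"
    using Mq_conjugate_diag[OF qinv qdiag m B mB i c0 m_c0 _ d] by simp
  also have "\<dots> = (\<Sum>j\<in>{0..<n}. \<Sum>l\<in>{0..<n}. q $$ (l, i) * m $$ (d, l) * (B $$ (l, j) * m $$ (j, k)))"
    unfolding sum_distrib_right by (intro sum.cong refl) (simp add: algebra_simps)
  also have "\<dots> = (\<Sum>l\<in>{0..<n}. q $$ (l, i) * m $$ (d, l) * (\<Sum>j\<in>{0..<n}. B $$ (l, j) * m $$ (j, k)))"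
    by (subst sum.swap) (simp add: sum_distrib_left)
  also have "\<dots> = (\<Sum>l\<in>{0..<n}. q $$ (l, i) * m $$ (d, l) * (B * m) $$ (l, k))"
    using B m_carrier k by (intro sum.cong) (simp_all add: scalar_prod_def)
  also have "\<dots> = q $$ (k, i) * m $$ (d, k)"
    using Bm k by (simp add: if_distrib[of "\<lambda>x. _ * x"] cong: if_cong)
  finally show ?thesis using m_dk by simp
qed

lemma Skel_subset_Pq:
  fixes q m :: "'k::field mat"
  assumes qinv: "\<forall>i<n. \<forall>j<n. q $$ (i, j) * q $$ (j, i) = 1"
    and qdiag: "\<forall>i<n. q $$ (i, i) = 1" and m: "m \<in> Mq q n"
  shows "Skel n m \<subseteq> Pq q n"
proof
  fix p assume "p \<in> Skel n m"
  then have p: "p permutes {..<n}" and skel: "\<forall>i<n. m $$ (p i, i) \<noteq> 0"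
    by (auto simp: Skel_def)
  have "q $$ (p i, p j) = q $$ (i, j)" if "i < n" "j < n" for i j
    using Mq_support_q_compatible[OF qinv qdiag m, of j "p j" i "p i"] skel that
      permutes_in_image[OF p] by simp
  then show "p \<in> Pq q n" using p by (simp add: Pq_def)
qed

theorem lemma3p4:
  fixes q m :: "'k::field mat" and n :: nat and \<pi> :: "nat \<Rightarrow> nat"
  assumes "n \<ge> 1"
    and "q \<in> carrier_mat n n"
    and "\<forall>i<n. \<forall>j<n. q $$ (i, j) * q $$ (j, i) = 1"
    and "\<forall>i<n. q $$ (i, i) = 1"
    and "\<pi> permutes {..<n}"
    and "m \<in> carrier_mat n n" and "det m \<noteq> 0"
  shows "(\<pi> \<in> Pq q n \<longrightarrow> perm_matrix n \<pi> \<in> Mq q n) \<and>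
         (m \<in> Mq q n \<longrightarrow> Skel n m \<subseteq> Pq q n)"
  using perm_matrix_in_Mq Skel_subset_Pq[OF assms(3,4)] by blast

end
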